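(* Let $n\ge1$ and let $d$ be an $n$-dimension vector, and let $k_{n,d}(z)\in\mathbb{Z}[z]$ be the polynomial with $k_{n,d}(q)=k(\mathrm{P}_{n,d}(q),\mathrm{GL}_n(q))$ for all prime powers $q$. Then $z-1$ divides $k_{n,d}(z)$ in $\mathbb{Z}[z]$.
   Context: An $n$-dimension vector is a tuple $d=(d_1,\dots,d_t)$ of positive integers with $d_i<d_{i+1}$ and $d_t=n$; $\mathrm{P}_{n,d}(q)$ is the stabilizer in $\mathrm{GL}_n(q)$ of the standard flag $\{0\}\subset\mathbb{F}_q^{d_1}\subset\cdots\subset\mathbb{F}_q^{d_t}=\mathbb{F}_q^n$. $k(P,G)$ denotes the number of orbits of $P$ acting on $G$ by conjugation. *)

theory Defs
  imports "HOL-Algebra.Ring" "HOL-Computational_Algebra.Polynomial" "HOL-Computational_Algebra.Primes"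
begin

definition vec_space :: "('a, 'b) ring_scheme \<Rightarrow> nat \<Rightarrow> (nat \<Rightarrow> 'a) set" where
  "vec_space F n = {v. (\<forall>i<n. v i \<in> carrier F) \<and> (\<forall>i\<ge>n. v i = undefined)}"

definition mat_space :: "('a, 'b) ring_scheme \<Rightarrow> nat \<Rightarrow> (nat \<Rightarrow> nat \<Rightarrow> 'a) set" where
  "mat_space F n = {M. (\<forall>i<n. \<forall>j<n. M i j \<in> carrier F)
                      \<and> (\<forall>i j. \<not> (i < n \<and> j < n) \<longrightarrow> M i j = undefined)}"

definition mat_mult :: "('a, 'b) ring_scheme \<Rightarrow> nat \<Rightarrow> (nat \<Rightarrow> nat \<Rightarrow> 'a) \<Rightarrow> (nat \<Rightarrow> nat \<Rightarrow> 'a) \<Rightarrow> (nat \<Rightarrow> nat \<Rightarrow> 'a)" where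
  "mat_mult F n A B = (\<lambda>i j. if i < n \<and> j < n
       then finsum F (\<lambda>k. A i k \<otimes>\<^bsub>F\<^esub> B k j) {..<n} else undefined)"

definition mat_vec :: "('a, 'b) ring_scheme \<Rightarrow> nat \<Rightarrow> (nat \<Rightarrow> nat \<Rightarrow> 'a) \<Rightarrow> (nat \<Rightarrow> 'a) \<Rightarrow> (nat \<Rightarrow> 'a)" where
  "mat_vec F n A v = (\<lambda>i. if i < n then finsum F (\<lambda>k. A i k \<otimes>\<^bsub>F\<^esub> v k) {..<n} else undefined)"

definition mat_one :: "('a, 'b) ring_scheme \<Rightarrow> nat \<Rightarrow> (nat \<Rightarrow> nat \<Rightarrow> 'a)" where
  "mat_one F n = (\<lambda>i j. if i < n \<and> j < n then (if i = j then \<one>\<^bsub>F\<^esub> else \<zero>\<^bsub>F\<^esub>) else undefined)"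

definition GLn :: "('a, 'b) ring_scheme \<Rightarrow> nat \<Rightarrow> (nat \<Rightarrow> nat \<Rightarrow> 'a) set" where
  "GLn F n = {A \<in> mat_space F n. \<exists>B \<in> mat_space F n.
                 mat_mult F n A B = mat_one F n \<and> mat_mult F n B A = mat_one F n}"

definition mat_inv :: "('a, 'b) ring_scheme \<Rightarrow> nat \<Rightarrow> (nat \<Rightarrow> nat \<Rightarrow> 'a) \<Rightarrow> (nat \<Rightarrow> nat \<Rightarrow> 'a)" where
  "mat_inv F n A = (SOME B. B \<in> mat_space F n \<and>
                 mat_mult F n A B = mat_one F n \<and> mat_mult F n B A = mat_one F n)"

definition std_sub :: "('a, 'b) ring_scheme \<Rightarrow> nat \<Rightarrow> nat \<Rightarrow> (nat \<Rightarrow> 'a) set" where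
  "std_sub F n m = {v \<in> vec_space F n. \<forall>i. m \<le> i \<and> i < n \<longrightarrow> v i = \<zero>\<^bsub>F\<^esub>}"

definition dim_vector :: "nat \<Rightarrow> nat list \<Rightarrow> bool" where
  "dim_vector n d \<longleftrightarrow> d \<noteq> [] \<and> (\<forall>x\<in>set d. 0 < x) \<and> sorted_wrt (<) d \<and> last d = n"

definition parabolic :: "('a, 'b) ring_scheme \<Rightarrow> nat \<Rightarrow> nat list \<Rightarrow> (nat \<Rightarrow> nat \<Rightarrow> 'a) set" where
  "parabolic F n d = {g \<in> GLn F n. \<forall>m\<in>set d. mat_vec F n g ` std_sub F n m = std_sub F n m}"

definition num_conj_orbits :: "('a, 'b) ring_scheme \<Rightarrow> nat \<Rightarrow> (nat \<Rightarrow> nat \<Rightarrow> 'a) set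
      \<Rightarrow> (nat \<Rightarrow> nat \<Rightarrow> 'a) set \<Rightarrow> nat" where
  "num_conj_orbits F n P G =
     card ((\<lambda>g. {mat_mult F n (mat_mult F n p g) (mat_inv F n p) | p. p \<in> P}) ` G)"

end

theory Submission
  imports Defs "HOL-Number_Theory.Number_Theory" "HOL-Algebra.QuotRing" "Jordan_Normal_Form.Determinant"
begin

(* Over the prime field F_p, multiplication by a nonzero scalar a commutes with conjugation by P
   and multiplies determinants by a^n.  Hence the P-orbits in GL_n(F_p) of determinant c and of
   determinant a^n c are equinumerous, so k(p) is divisible by the number s_p of n-th powers in
   F_p^*.  As s_p divides p - 1, which divides k(p) - k(1), s_p divides k(1); since s_p >= (p - 1)/n
   is unbounded, k(1) = 0. *)

definition mat_smult :: "('a, 'b) ring_scheme \<Rightarrow> nat \<Rightarrow> 'a \<Rightarrow> (nat \<Rightarrow> nat \<Rightarrow> 'a) \<Rightarrow> (nat \<Rightarrow> nat \<Rightarrow> 'a)" where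
  "mat_smult F n a A = (\<lambda>i j. if i < n \<and> j < n then a \<otimes>\<^bsub>F\<^esub> A i j else undefined)"

lemma mat_inv_GLn:
  assumes "A \<in> GLn F n"
  shows mat_inv_closed: "mat_inv F n A \<in> mat_space F n"
    and mat_mult_inv_right: "mat_mult F n A (mat_inv F n A) = mat_one F n"
    and mat_mult_inv_left: "mat_mult F n (mat_inv F n A) A = mat_one F n"
proof -
  have "\<exists>B. B \<in> mat_space F n \<and> mat_mult F n A B = mat_one F n \<and> mat_mult F n B A = mat_one F n"
    using assms by (auto simp: GLn_def)
  from someI_ex[OF this] show "mat_inv F n A \<in> mat_space F n"
    "mat_mult F n A (mat_inv F n A) = mat_one F n" "mat_mult F n (mat_inv F n A) A = mat_one F n"
    unfolding mat_inv_def by auto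
qed

lemma GLn_subset_mat_space: "GLn F n \<subseteq> mat_space F n"
  by (auto simp: GLn_def)

lemma parabolic_subset_GLn: "parabolic F n d \<subseteq> GLn F n"
  by (auto simp: parabolic_def)

definition conj_orbit :: "('a, 'b) ring_scheme \<Rightarrow> nat \<Rightarrow> (nat \<Rightarrow> nat \<Rightarrow> 'a) set
    \<Rightarrow> (nat \<Rightarrow> nat \<Rightarrow> 'a) \<Rightarrow> (nat \<Rightarrow> nat \<Rightarrow> 'a) set" where
  "conj_orbit F n P g = {mat_mult F n (mat_mult F n q g) (mat_inv F n q) | q. q \<in> P}"

lemma num_conj_orbits_eq_card: "num_conj_orbits F n P G = card (conj_orbit F n P ` G)"
  unfolding num_conj_orbits_def conj_orbit_def ..

context cring
begin

lemma mat_mult_closed: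
  "A \<in> mat_space R n \<Longrightarrow> B \<in> mat_space R n \<Longrightarrow> mat_mult R n A B \<in> mat_space R n"
  by (auto simp: mat_mult_def mat_space_def intro!: finsum_closed)

lemma mat_one_closed: "mat_one R n \<in> mat_space R n"
  by (auto simp: mat_one_def mat_space_def)

lemma mat_smult_closed:
  "a \<in> carrier R \<Longrightarrow> A \<in> mat_space R n \<Longrightarrow> mat_smult R n a A \<in> mat_space R n"
  by (auto simp: mat_smult_def mat_space_def)

lemma mat_mult_one_left:
  assumes "A \<in> mat_space R n" shows "mat_mult R n (mat_one R n) A = A"
proof -
  have "(\<Oplus>k\<in>{..<n}. mat_one R n i k \<otimes> A k j) = A i j" if "i < n" "j < n" for i j
  proof -
    have "(\<Oplus>k\<in>{..<n}. mat_one R n i k \<otimes> A k j) = (\<Oplus>k\<in>{..<n}. if i = k then A k j else \<zero>)"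
      using assms that by (intro add.finprod_cong') (auto simp: mat_one_def mat_space_def)
    also have "\<dots> = A i j"
      using assms that by (intro add.finprod_singleton) (auto simp: mat_space_def)
    finally show ?thesis .
  qed
  then show ?thesis using assms by (auto simp: mat_mult_def mat_space_def fun_eq_iff)
qed

lemma mat_mult_one_right:
  assumes "A \<in> mat_space R n" shows "mat_mult R n A (mat_one R n) = A"
proof -
  have "(\<Oplus>k\<in>{..<n}. A i k \<otimes> mat_one R n k j) = A i j" if "i < n" "j < n" for i j
  proof -
    have "(\<Oplus>k\<in>{..<n}. A i k \<otimes> mat_one R n k j) = (\<Oplus>k\<in>{..<n}. if j = k then A i k else \<zero>)"
      using assms that by (intro add.finprod_cong') (auto simp: mat_one_def mat_space_def)
    also have "\<dots> = A i j"
      using assms that by (intro add.finprod_singleton) (auto simp: mat_space_def)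
    finally show ?thesis .
  qed
  then show ?thesis using assms by (auto simp: mat_mult_def mat_space_def fun_eq_iff)
qed

lemma mat_vec_one:
  assumes "v \<in> vec_space R n" shows "mat_vec R n (mat_one R n) v = v"
proof -
  have "(\<Oplus>k\<in>{..<n}. mat_one R n i k \<otimes> v k) = v i" if "i < n" for i
  proof -
    have "(\<Oplus>k\<in>{..<n}. mat_one R n i k \<otimes> v k) = (\<Oplus>k\<in>{..<n}. if i = k then v k else \<zero>)"
      using assms that by (intro add.finprod_cong') (auto simp: mat_one_def vec_space_def)
    also have "\<dots> = v i"
      using assms that by (intro add.finprod_singleton) (auto simp: vec_space_def)
    finally show ?thesis .
  qed
  then show ?thesis using assms by (auto simp: mat_vec_def vec_space_def fun_eq_iff)
qed

lemma mat_one_GLn: "mat_one R n \<in> GLn R n"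
  unfolding GLn_def using mat_one_closed mat_mult_one_left[OF mat_one_closed] by blast

lemma mat_one_parabolic: "mat_one R n \<in> parabolic R n d"
proof -
  have "mat_vec R n (mat_one R n) ` std_sub R n m = id ` std_sub R n m" for m
    by (rule image_cong) (simp_all add: std_sub_def mat_vec_one)
  then show ?thesis unfolding parabolic_def using mat_one_GLn by simp
qed

lemma mat_inv_one: "mat_inv R n (mat_one R n) = mat_one R n"
  using mat_inv_GLn[OF mat_one_GLn] mat_mult_one_left by metis

lemma mat_mult_smult_left:
  assumes "a \<in> carrier R" "A \<in> mat_space R n" "B \<in> mat_space R n"
  shows "mat_mult R n (mat_smult R n a A) B = mat_smult R n a (mat_mult R n A B)"
proof -
  have "(\<Oplus>k\<in>{..<n}. mat_smult R n a A i k \<otimes> B k j) = a \<otimes> (\<Oplus>k\<in>{..<n}. A i k \<otimes> B k j)"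
    if "i < n" "j < n" for i j
    using assms that
    by (subst finsum_rdistr) (auto simp: mat_space_def mat_smult_def m_assoc intro: add.finprod_cong')
  then show ?thesis by (auto simp: mat_mult_def mat_smult_def fun_eq_iff)
qed

lemma mat_mult_smult_right:
  assumes "a \<in> carrier R" "A \<in> mat_space R n" "B \<in> mat_space R n"
  shows "mat_mult R n A (mat_smult R n a B) = mat_smult R n a (mat_mult R n A B)"
proof -
  have "(\<Oplus>k\<in>{..<n}. A i k \<otimes> mat_smult R n a B k j) = a \<otimes> (\<Oplus>k\<in>{..<n}. A i k \<otimes> B k j)"
    if "i < n" "j < n" for i j
    using assms that
    by (subst finsum_rdistr) (auto simp: mat_space_def mat_smult_def m_lcomm intro: add.finprod_cong')
  then show ?thesis by (auto simp: mat_mult_def mat_smult_def fun_eq_iff)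
qed

lemma mat_smult_smult:
  "a \<in> carrier R \<Longrightarrow> b \<in> carrier R \<Longrightarrow> A \<in> mat_space R n \<Longrightarrow>
    mat_smult R n a (mat_smult R n b A) = mat_smult R n (a \<otimes> b) A"
  by (auto simp: mat_smult_def mat_space_def fun_eq_iff m_assoc)

lemma mat_smult_one: "A \<in> mat_space R n \<Longrightarrow> mat_smult R n \<one> A = A"
  by (auto simp: mat_smult_def mat_space_def fun_eq_iff)

lemma conj_orbit_subset:
  "P \<subseteq> GLn R n \<Longrightarrow> g \<in> mat_space R n \<Longrightarrow> conj_orbit R n P g \<subseteq> mat_space R n"
  unfolding conj_orbit_def using GLn_subset_mat_space mat_inv_closed by (blast intro: mat_mult_closed)

lemma mem_conj_orbit_self:
  assumes "mat_one R n \<in> P" "g \<in> mat_space R n" shows "g \<in> conj_orbit R n P g"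
proof -
  have "g = mat_mult R n (mat_mult R n (mat_one R n) g) (mat_inv R n (mat_one R n))"
    using assms(2) by (simp add: mat_inv_one mat_mult_one_left mat_mult_one_right)
  with assms(1) show ?thesis unfolding conj_orbit_def by blast
qed

lemma conj_orbit_smult:
  assumes "a \<in> carrier R" "P \<subseteq> GLn R n" "g \<in> mat_space R n"
  shows "conj_orbit R n P (mat_smult R n a g) = mat_smult R n a ` conj_orbit R n P g"
proof -
  have "mat_mult R n (mat_mult R n q (mat_smult R n a g)) (mat_inv R n q)
      = mat_smult R n a (mat_mult R n (mat_mult R n q g) (mat_inv R n q))" if "q \<in> P" for q
  proof -
    have q: "q \<in> mat_space R n" "mat_inv R n q \<in> mat_space R n"
      using that assms(2) GLn_subset_mat_space mat_inv_closed by blast+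
    show ?thesis
      by (simp add: mat_mult_smult_right[OF assms(1) q(1) assms(3)]
          mat_mult_smult_left[OF assms(1) mat_mult_closed[OF q(1) assms(3)] q(2)])
  qed
  then show ?thesis
    unfolding conj_orbit_def Setcompr_eq_image image_image by (rule image_cong[OF refl])
qed

end

context field
begin

lemma mat_smult_GLn:
  assumes "a \<in> carrier R - {\<zero>}" "g \<in> GLn R n"
  shows "mat_smult R n a g \<in> GLn R n"
proof -
  obtain B where B: "B \<in> mat_space R n" "mat_mult R n g B = mat_one R n" "mat_mult R n B g = mat_one R n"
    using assms(2) by (auto simp: GLn_def)
  have a: "a \<in> carrier R" "inv a \<in> carrier R" "a \<otimes> inv a = \<one>" "inv a \<otimes> a = \<one>"
    using assms(1) field_Units by auto
  have g: "g \<in> mat_space R n" using assms(2) GLn_subset_mat_space by blast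
  have "mat_mult R n (mat_smult R n a g) (mat_smult R n (inv a) B) = mat_one R n"
       "mat_mult R n (mat_smult R n (inv a) B) (mat_smult R n a g) = mat_one R n"
    using a g B by (simp_all add: mat_mult_smult_left mat_mult_smult_right mat_smult_closed
        mat_mult_closed mat_smult_smult mat_smult_one mat_one_closed)
  with a g B show ?thesis unfolding GLn_def by (blast intro: mat_smult_closed)
qed

lemma inj_on_mat_smult:
  assumes "a \<in> carrier R - {\<zero>}" shows "inj_on (mat_smult R n a) (mat_space R n)"
proof (rule inj_on_inverseI)
  fix A assume "A \<in> mat_space R n"
  with assms field_Units show "mat_smult R n (inv a) (mat_smult R n a A) = A"
    by (simp add: mat_smult_smult mat_smult_one)
qed

end

lemma finite_mat_space:
  assumes "finite (carrier F)" shows "finite (mat_space F n)"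
proof -
  let ?extend = "\<lambda>f i j. if i < n \<and> j < n then f (i, j) else undefined"
  have "mat_space F n \<subseteq> ?extend ` (({..<n} \<times> {..<n}) \<rightarrow>\<^sub>E carrier F)"
  proof
    fix M assume M: "M \<in> mat_space F n"
    then have "M = ?extend (restrict (\<lambda>(i, j). M i j) ({..<n} \<times> {..<n}))"
      by (auto simp: mat_space_def fun_eq_iff)
    moreover have "restrict (\<lambda>(i, j). M i j) ({..<n} \<times> {..<n}) \<in> ({..<n} \<times> {..<n}) \<rightarrow>\<^sub>E carrier F"
      using M by (auto simp: mat_space_def)
    ultimately show "M \<in> ?extend ` (({..<n} \<times> {..<n}) \<rightarrow>\<^sub>E carrier F)" by blast
  qed
  moreover have "finite (?extend ` (({..<n} \<times> {..<n}) \<rightarrow>\<^sub>E carrier F))"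
    using assms by (intro finite_imageI finite_PiE) auto
  ultimately show ?thesis by (rule finite_subset)
qed

lemma finite_GLn: "finite (carrier F) \<Longrightarrow> finite (GLn F n)"
  using finite_mat_space GLn_subset_mat_space finite_subset by metis

section \<open>The prime field GF p\<close>

definition GF :: "nat \<Rightarrow> nat ring" where
  "GF p = \<lparr>carrier = {..<p}, monoid.mult = (\<lambda>a b. a * b mod p), one = 1,
           zero = 0, add = (\<lambda>a b. (a + b) mod p)\<rparr>"

lemma GF_simps [simp]:
  "carrier (GF p) = {..<p}" "a \<otimes>\<^bsub>GF p\<^esub> b = a * b mod p" "a \<oplus>\<^bsub>GF p\<^esub> b = (a + b) mod p"
  "\<one>\<^bsub>GF p\<^esub> = 1" "\<zero>\<^bsub>GF p\<^esub> = 0"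
  by (simp_all add: GF_def)

lemma field_GF:
  assumes "prime p" shows "field (GF p)"
proof -
  define R where "R = residue_ring (int p)"
  interpret residues_prime p R by unfold_locales (simp_all add: assms R_def)
  have carrier_R: "carrier R = {0..<int p}" by (auto simp: R_def residue_ring_def)
  have "nat \<in> ring_iso R (GF p)"
    unfolding ring_iso_def
  proof (intro CollectI conjI)
    show "nat \<in> Ring.ring_hom R (GF p)"
      by (rule ring_hom_memI)
        (auto simp: R_def residue_ring_def nat_mod_distrib nat_mult_distrib nat_add_distrib)
    have "nat ` {0..<int p} = {..<p}"
      by (force simp: image_iff intro: bexI[where x = "int _"])
    then show "bij_betw nat (carrier R) (carrier (GF p))"
      by (auto simp: carrier_R bij_betw_def inj_on_def)
  qed
  from ring_iso_imp_img_field[OF this] show ?thesis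
    by (simp add: R_def residue_ring_def GF_def)
qed

lemma finsum_GF:
  assumes "prime p" "finite A" "f \<in> A \<rightarrow> {..<p}"
  shows "finsum (GF p) f A = (\<Sum>a\<in>A. f a) mod p"
proof -
  interpret field "GF p" using field_GF[OF assms(1)] .
  show ?thesis
    using assms(2,3)
  proof (induction A rule: finite_induct)
    case (insert a A)
    have "finsum (GF p) f (insert a A) = f a \<oplus>\<^bsub>GF p\<^esub> finsum (GF p) f A"
      using insert by (intro finsum_insert) auto
    with insert show ?case by (simp add: mod_add_right_eq)
  qed simp
qed

lemma mat_mult_GF:
  assumes "prime p"
  shows "mat_mult (GF p) n A B =
    (\<lambda>i j. if i < n \<and> j < n then (\<Sum>k<n. A i k * B k j) mod p else undefined)"
proof -
  have "p > 0" using assms prime_gt_0_nat by blast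
  then have "finsum (GF p) (\<lambda>k. A i k \<otimes>\<^bsub>GF p\<^esub> B k j) {..<n} = (\<Sum>k<n. A i k * B k j) mod p"
    for i j by (simp add: finsum_GF[OF assms] mod_sum_eq)
  then show ?thesis unfolding mat_mult_def by (simp only:)
qed

lemma nat_pow_GF: "p > 1 \<Longrightarrow> a [^]\<^bsub>GF p\<^esub> n = a ^ n mod p"
  by (induction n) (simp_all add: mod_mult_left_eq mod_mult_right_eq mult.commute)

section \<open>Determinants modulo p\<close>

lemma det_cong:
  assumes "A \<in> carrier_mat n n" "B \<in> carrier_mat n n"
    and "\<And>i j. i < n \<Longrightarrow> j < n \<Longrightarrow> [A $$ (i, j) = B $$ (i, j)] (mod m)"
  shows "[det A = det B] (mod m)"
  unfolding det_def'[OF assms(1)] det_def'[OF assms(2)]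
proof (intro cong_sum cong_mult cong_refl cong_prod)
  fix \<pi> i assume "\<pi> \<in> {\<pi>. \<pi> permutes {0..<n}}" "i \<in> {0..<n}"
  then show "[A $$ (i, \<pi> i) = B $$ (i, \<pi> i)] (mod m)"
    by (intro assms(3)) (auto simp: permutes_in_image)
qed

(* Determinants over GF p are taken of the integer lift, where Jordan_Normal_Form provides det
   and its multiplicativity; reduction mod p commutes with both. *)
definition int_mat :: "nat \<Rightarrow> (nat \<Rightarrow> nat \<Rightarrow> nat) \<Rightarrow> int mat" where
  "int_mat n A = mat n n (\<lambda>(i, j). int (A i j))"

definition det_mod :: "nat \<Rightarrow> nat \<Rightarrow> (nat \<Rightarrow> nat \<Rightarrow> nat) \<Rightarrow> nat" where
  "det_mod p n A = nat (det (int_mat n A) mod int p)"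

lemma int_mat_carrier [simp]: "int_mat n A \<in> carrier_mat n n"
  by (simp add: int_mat_def)

lemma int_det_mod: "p > 0 \<Longrightarrow> int (det_mod p n A) = det (int_mat n A) mod int p"
  by (simp add: det_mod_def)

lemma det_mod_less: "p > 0 \<Longrightarrow> det_mod p n A < p"
  unfolding det_mod_def by (simp add: nat_less_iff)

lemma det_mod_mult:
  assumes "prime p"
  shows "det_mod p n (mat_mult (GF p) n A B) = det_mod p n A * det_mod p n B mod p"
proof -
  have p: "p > 0" using assms prime_gt_0_nat by blast
  have "[det (int_mat n (mat_mult (GF p) n A B)) = det (int_mat n A * int_mat n B)] (mod int p)"
  proof (rule det_cong)
    fix i j assume "i < n" "j < n"
    then show "[int_mat n (mat_mult (GF p) n A B) $$ (i, j) = (int_mat n A * int_mat n B) $$ (i, j)] (mod int p)"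
      by (simp add: int_mat_def mat_mult_GF[OF assms] scalar_prod_def lessThan_atLeast0 of_nat_mod cong_def)
  qed (simp_all add: mult_carrier_mat[of _ n n])
  also have "det (int_mat n A * int_mat n B) = det (int_mat n A) * det (int_mat n B)"
    by (rule det_mult[of _ n]) auto
  finally have "int (det_mod p n (mat_mult (GF p) n A B)) = int (det_mod p n A * det_mod p n B mod p)"
    using p by (simp add: int_det_mod cong_def of_nat_mod mod_mult_eq)
  then show ?thesis by simp
qed

lemma det_mod_one:
  assumes "p > 1" shows "det_mod p n (mat_one (GF p) n) = 1"
proof -
  have "int_mat n (mat_one (GF p) n) = 1\<^sub>m n"
    by (rule eq_matI) (auto simp: int_mat_def mat_one_def)
  with assms show ?thesis by (simp add: det_mod_def)
qed

lemma det_mod_smult: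
  assumes "p > 0"
  shows "det_mod p n (mat_smult (GF p) n a A) = a ^ n * det_mod p n A mod p"
proof -
  have "[det (int_mat n (mat_smult (GF p) n a A)) = det (int a \<cdot>\<^sub>m int_mat n A)] (mod int p)"
    by (rule det_cong) (auto simp: int_mat_def mat_smult_def of_nat_mod cong_def)
  then have "int (det_mod p n (mat_smult (GF p) n a A)) = int (a ^ n * det_mod p n A mod p)"
    using assms by (simp add: int_det_mod cong_def of_nat_mod mod_mult_right_eq int_mat_def)
  then show ?thesis by simp
qed


lemma det_mod_mult_inv:
  assumes "prime p" "g \<in> GLn (GF p) n"
  shows "det_mod p n g * det_mod p n (mat_inv (GF p) n g) mod p = 1"
  using det_mod_mult[OF assms(1)] mat_mult_inv_right[OF assms(2)] det_mod_one prime_gt_1_nat[OF assms(1)]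
  by metis

lemma det_mod_GLn:
  assumes "prime p" "g \<in> GLn (GF p) n" shows "det_mod p n g \<in> {1..<p}"
  using det_mod_mult_inv[OF assms] det_mod_less[of p n g] prime_gt_0_nat[OF assms(1)]
  by (cases "det_mod p n g") auto

lemma det_mod_conj:
  assumes "prime p" "q \<in> GLn (GF p) n"
  shows "det_mod p n (mat_mult (GF p) n (mat_mult (GF p) n q g) (mat_inv (GF p) n q)) = det_mod p n g"
proof -
  let ?dq = "det_mod p n q" and ?dg = "det_mod p n g" and ?di = "det_mod p n (mat_inv (GF p) n q)"
  have "det_mod p n (mat_mult (GF p) n (mat_mult (GF p) n q g) (mat_inv (GF p) n q))
      = ?dq * ?dg mod p * ?di mod p"
    by (simp add: det_mod_mult[OF assms(1)])
  also have "\<dots> = ?dg * (?dq * ?di mod p) mod p"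
    by (simp add: mod_mult_left_eq mod_mult_right_eq ac_simps)
  also have "\<dots> = ?dg"
    using det_mod_mult_inv[OF assms] det_mod_less prime_gt_0_nat[OF assms(1)] by simp
  finally show ?thesis .
qed

section \<open>Counting n-th powers modulo p\<close>

lemma (in group) card_subgroup_dvd_sum:
  assumes "finite (carrier G)" "subgroup H G"
    and "\<And>h x. h \<in> H \<Longrightarrow> x \<in> carrier G \<Longrightarrow> f (h \<otimes> x) = f x"
  shows "card H dvd (\<Sum>x\<in>carrier G. f x)"
proof -
  have H: "H \<subseteq> carrier G" using assms(2) subgroup.subset by blast
  have finite: "\<forall>C\<in>rcosets H. finite C"
    using assms(1) H cosets_finite by blast
  have disjoint: "\<forall>A\<in>rcosets H. \<forall>B\<in>rcosets H. A \<noteq> B \<longrightarrow> A \<inter> B = {}"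
    using rcos_disjoint[OF assms(2)] by (auto simp: pairwise_def disjnt_def)
  have "(\<Sum>x\<in>carrier G. f x) = (\<Sum>C\<in>rcosets H. \<Sum>x\<in>C. f x)"
    using sum.Union_disjoint[OF finite disjoint, of f] by (simp add: rcosets_part_G[OF assms(2)] o_def)
  also have "card H dvd \<dots>"
  proof (rule dvd_sum)
    fix C assume C: "C \<in> rcosets H"
    then obtain x where x: "x \<in> carrier G" "C = H #> x" by (auto simp: RCOSETS_def)
    have "(\<Sum>y\<in>C. f y) = (\<Sum>y\<in>C. f x)"
      using x assms(3) by (intro sum.cong) (auto simp: r_coset_def)
    also have "\<dots> = card H * f x"
      using card_rcosets_equal[OF C H] by simp
    finally show "card H dvd (\<Sum>y\<in>C. f y)" by simp
  qed
  finally show ?thesis .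
qed

lemma (in comm_group) subgroup_nat_pow_image: "subgroup ((\<lambda>x. x [^] (n::nat)) ` carrier G) G"
proof -
  have "group_hom G G (\<lambda>x. x [^] n)"
    by unfold_locales (auto intro!: homI simp: nat_pow_distrib)
  then show ?thesis by (rule group_hom.img_is_subgroup)
qed

lemma card_nth_powers_dvd_sum:
  fixes p :: nat and f :: "nat \<Rightarrow> nat"
  assumes "prime p" "\<And>a c. a \<in> {1..<p} \<Longrightarrow> c \<in> {1..<p} \<Longrightarrow> f (a ^ n * c mod p) = f c"
  shows "card ((\<lambda>a. a ^ n mod p) ` {1..<p}) dvd (\<Sum>c\<in>{1..<p}. f c)"
proof -
  interpret GF: field "GF p" using field_GF[OF assms(1)] .
  interpret G: comm_group "mult_of (GF p)"
    by (rule group.group_comm_groupI[OF GF.field_mult_group]) (auto simp: mult.commute)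
  have p: "p > 1" using assms(1) prime_gt_1_nat by blast
  have carrier: "carrier (mult_of (GF p)) = {1..<p}" by auto
  have powers: "(\<lambda>a. a ^ n mod p) ` {1..<p} = (\<lambda>a. a [^]\<^bsub>mult_of (GF p)\<^esub> n) ` carrier (mult_of (GF p))"
    using p carrier by (simp add: nat_pow_mult_of nat_pow_GF)
  show ?thesis
    unfolding powers unfolding carrier[symmetric]
  proof (rule G.card_subgroup_dvd_sum[OF _ G.subgroup_nat_pow_image])
    fix h c assume "h \<in> (\<lambda>a. a [^]\<^bsub>mult_of (GF p)\<^esub> n) ` carrier (mult_of (GF p))"
      and c: "c \<in> carrier (mult_of (GF p))"
    then obtain a where "a \<in> {1..<p}" "h = a ^ n mod p"
      using p carrier by (auto simp: nat_pow_mult_of nat_pow_GF)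
    with c assms(2) show "f (h \<otimes>\<^bsub>mult_of (GF p)\<^esub> c) = f c"
      by (simp add: mod_mult_left_eq)
  qed simp
qed

lemma card_nth_powers_dvd:
  "prime p \<Longrightarrow> card ((\<lambda>a. a ^ n mod p) ` {1..<p}) dvd p - 1"
  using card_nth_powers_dvd_sum[of p "\<lambda>_. 1" n] by simp

lemma card_nth_powers_ge:
  assumes "prime p" "n > 0"
  shows "p - 1 \<le> n * card ((\<lambda>a. a ^ n mod p) ` {1..<p})"
proof -
  define S where "S = (\<lambda>a. a ^ n mod p) ` {1..<p}"
  define roots where "roots s = {x\<in>{..<p}. [x ^ n = s] (mod p)}" for s
  have "card {1..<p} \<le> card (\<Union>s\<in>S. roots s)"
    by (intro card_mono) (auto simp: S_def roots_def cong_def)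
  also have "\<dots> \<le> (\<Sum>s\<in>S. card (roots s))"
    by (rule card_UN_le) (simp add: S_def)
  also have "\<dots> \<le> (\<Sum>s\<in>S. n)"
    unfolding roots_def by (intro sum_mono roots_mod_prime_bound assms)
  finally show ?thesis by (simp add: S_def mult.commute)
qed

section \<open>Orbits sorted by determinant\<close>

definition orbits_with_det :: "nat \<Rightarrow> nat \<Rightarrow> (nat \<Rightarrow> nat \<Rightarrow> nat) set \<Rightarrow> nat \<Rightarrow> (nat \<Rightarrow> nat \<Rightarrow> nat) set set" where
  "orbits_with_det p n P c = conj_orbit (GF p) n P ` {g \<in> GLn (GF p) n. det_mod p n g = c}"

context
  fixes p n :: nat and P :: "(nat \<Rightarrow> nat \<Rightarrow> nat) set"
  assumes prime: "prime p" and P_GLn: "P \<subseteq> GLn (GF p) n" and one_in_P: "mat_one (GF p) n \<in> P"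
begin

interpretation GF: field "GF p" by (rule field_GF[OF prime])

lemma det_mod_conj_orbit: "h \<in> conj_orbit (GF p) n P g \<Longrightarrow> det_mod p n h = det_mod p n g"
  using det_mod_conj[OF prime] P_GLn by (auto simp: conj_orbit_def)

lemma conj_orbits_eq_UN:
  "conj_orbit (GF p) n P ` GLn (GF p) n = (\<Union>c\<in>{1..<p}. orbits_with_det p n P c)"
  unfolding orbits_with_det_def using det_mod_GLn[OF prime] by blast

lemma orbits_with_det_disjoint:
  assumes "c \<noteq> c'" shows "orbits_with_det p n P c \<inter> orbits_with_det p n P c' = {}"
proof -
  have "det_mod p n g' = det_mod p n g"
    if "g' \<in> GLn (GF p) n" "conj_orbit (GF p) n P g = conj_orbit (GF p) n P g'" for g g'
    using that GF.mem_conj_orbit_self[OF one_in_P] GLn_subset_mat_space det_mod_conj_orbit by blast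
  with assms show ?thesis unfolding orbits_with_det_def by blast
qed

lemma card_conj_orbits_eq_sum:
  "card (conj_orbit (GF p) n P ` GLn (GF p) n) = (\<Sum>c\<in>{1..<p}. card (orbits_with_det p n P c))"
  unfolding conj_orbits_eq_UN
proof (intro card_UN_disjoint ballI impI)
  show "finite (orbits_with_det p n P c)" for c
    using finite_GLn[of "GF p" n] by (simp add: orbits_with_det_def)
qed (simp_all add: orbits_with_det_disjoint)

lemma card_orbits_with_det_le:
  assumes "a \<in> {1..<p}"
  shows "card (orbits_with_det p n P c) \<le> card (orbits_with_det p n P (a ^ n * c mod p))"
proof (rule card_inj_on_le)
  have a: "a \<in> carrier (GF p) - {\<zero>\<^bsub>GF p\<^esub>}" using assms by simp
  have "\<Union> (orbits_with_det p n P c) \<subseteq> mat_space (GF p) n"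
    using GF.conj_orbit_subset[OF P_GLn] GLn_subset_mat_space by (auto simp: orbits_with_det_def)
  then show "inj_on ((`) (mat_smult (GF p) n a)) (orbits_with_det p n P c)"
    by (intro inj_on_image inj_on_subset[OF GF.inj_on_mat_smult[OF a]])
  show "(`) (mat_smult (GF p) n a) ` orbits_with_det p n P c \<subseteq> orbits_with_det p n P (a ^ n * c mod p)"
  proof
    fix Y assume "Y \<in> (`) (mat_smult (GF p) n a) ` orbits_with_det p n P c"
    then obtain g where g: "g \<in> GLn (GF p) n" "det_mod p n g = c"
      and Y: "Y = mat_smult (GF p) n a ` conj_orbit (GF p) n P g"
      by (auto simp: orbits_with_det_def)
    have "Y = conj_orbit (GF p) n P (mat_smult (GF p) n a g)"
      using Y g(1) a GF.conj_orbit_smult[OF _ P_GLn, of a g] GLn_subset_mat_space by auto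
    moreover have "mat_smult (GF p) n a g \<in> GLn (GF p) n" using GF.mat_smult_GLn[OF a g(1)] .
    moreover have "det_mod p n (mat_smult (GF p) n a g) = a ^ n * c mod p"
      using g(2) prime_gt_0_nat[OF prime] by (simp add: det_mod_smult)
    ultimately show "Y \<in> orbits_with_det p n P (a ^ n * c mod p)"
      unfolding orbits_with_det_def by blast
  qed
  show "finite (orbits_with_det p n P (a ^ n * c mod p))"
    using finite_GLn[of "GF p" n] by (simp add: orbits_with_det_def)
qed

lemma card_orbits_with_det_nth_power_mult:
  assumes a: "a \<in> {1..<p}" and c: "c \<in> {1..<p}"
  shows "card (orbits_with_det p n P (a ^ n * c mod p)) = card (orbits_with_det p n P c)"
proof (rule antisym)
  define b where "b = inv\<^bsub>GF p\<^esub> a"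
  have "a \<in> Units (GF p)" using a GF.field_Units by auto
  then have "b \<in> Units (GF p)" "b \<otimes>\<^bsub>GF p\<^esub> a = \<one>\<^bsub>GF p\<^esub>"
    unfolding b_def by (rule GF.Units_inv_Units, rule GF.Units_l_inv)
  then have b: "b \<in> {1..<p}" "b * a mod p = 1" using GF.field_Units by auto
  have "\<not> p dvd a" "\<not> p dvd c" using a c by (auto dest: dvd_imp_le)
  then have "\<not> p dvd a ^ n * c"
    using prime by (auto simp: prime_dvd_mult_iff dest: prime_dvd_power)
  then have ac: "a ^ n * c mod p \<in> {1..<p}"
    using prime_gt_0_nat[OF prime] by (auto simp: dvd_eq_mod_eq_0)
  have "b ^ n * (a ^ n * c mod p) mod p = (b * a) ^ n * c mod p"
    by (simp add: mod_mult_right_eq power_mult_distrib mult.assoc)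
  also have "\<dots> = (b * a mod p) ^ n * c mod p"
    by (metis mod_mult_left_eq power_mod)
  also have "\<dots> = c" using b(2) c by simp
  finally show "card (orbits_with_det p n P (a ^ n * c mod p)) \<le> card (orbits_with_det p n P c)"
    using card_orbits_with_det_le[OF b(1), of "a ^ n * c mod p"] by simp
  show "card (orbits_with_det p n P c) \<le> card (orbits_with_det p n P (a ^ n * c mod p))"
    by (rule card_orbits_with_det_le[OF a])
qed

lemma card_nth_powers_dvd_card_conj_orbits:
  "card ((\<lambda>a. a ^ n mod p) ` {1..<p}) dvd card (conj_orbit (GF p) n P ` GLn (GF p) n)"
  unfolding card_conj_orbits_eq_sum
  by (rule card_nth_powers_dvd_sum[OF prime card_orbits_with_det_nth_power_mult])

end

lemma card_nth_powers_dvd_num_conj_orbits_parabolic: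
  assumes "prime p"
  shows "card ((\<lambda>a. a ^ n mod p) ` {1..<p}) dvd num_conj_orbits (GF p) n (parabolic (GF p) n d) (GLn (GF p) n)"
proof -
  interpret field "GF p" by (rule field_GF[OF assms])
  show ?thesis
    unfolding num_conj_orbits_eq_card
    by (rule card_nth_powers_dvd_card_conj_orbits[OF assms parabolic_subset_GLn mat_one_parabolic])
qed

lemma poly_diff_dvd:
  fixes k :: "'a :: comm_ring_1 poly"
  shows "x - y dvd poly k x - poly k y"
proof -
  have "poly (k - [:poly k y:]) y = 0" by simp
  then obtain r where "k - [:poly k y:] = [:-y, 1:] * r" unfolding poly_eq_0_iff_dvd by (rule dvdE)
  then have "poly (k - [:poly k y:]) x = poly ([:-y, 1:] * r) x" by simp
  then have "poly k x - poly k y = (x - y) * poly r x" by (simp add: algebra_simps)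
  then show ?thesis by simp
qed

lemma poly_one_eq_0_if_large_divisors:
  fixes k :: "int poly" and c :: nat
  assumes "\<And>N. \<exists>m s. N < m \<and> s dvd m - 1 \<and> int s dvd poly k (int m) \<and> m - 1 \<le> c * s"
  shows "poly k 1 = 0"
proof (rule ccontr)
  assume nonzero: "poly k 1 \<noteq> 0"
  obtain m s where m: "c * nat \<bar>poly k 1\<bar> + 1 < m" and s: "s dvd m - 1" "int s dvd poly k (int m)"
    and bound: "m - 1 \<le> c * s"
    using assms by blast
  have "int s dvd int m - 1" using s(1) m by (simp add: of_nat_diff flip: int_dvd_int_iff)
  then have "int s dvd poly k (int m) - poly k 1" using poly_diff_dvd[of "int m" 1 k] dvd_trans by blast
  with s(2) have "int s dvd poly k (int m) - (poly k (int m) - poly k 1)" by (rule dvd_diff)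
  then have "int s dvd poly k 1" by simp
  then have "int s \<le> \<bar>poly k 1\<bar>" using dvd_imp_le_int[OF nonzero] by fastforce
  then have "s \<le> nat \<bar>poly k 1\<bar>" by (simp add: le_nat_iff)
  then have "m - 1 \<le> c * nat \<bar>poly k 1\<bar>" using bound mult_le_mono2 order_trans by blast
  with m show False by linarith
qed

theorem mainTheorem5:
  fixes n :: nat and d :: "nat list" and k :: "int poly"
  assumes "n \<ge> 1"
    and "dim_vector n d"
    and "\<forall>q::nat. (\<exists>p e. prime p \<and> e \<ge> 1 \<and> q = p ^ e) \<longrightarrow>
           (\<forall>F :: nat ring. field F \<and> finite (carrier F) \<and> card (carrier F) = q \<longrightarrow>
              poly k (int q) = int (num_conj_orbits F n (parabolic F n d) (GLn F n)))"
  shows "[:-1, 1:] dvd k"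
proof -
  have "poly k 1 = 0"
  proof (rule poly_one_eq_0_if_large_divisors[of k n])
    fix N :: nat
    obtain p where p: "prime p" "N < p" using bigger_prime by blast
    define s where "s = card ((\<lambda>a. a ^ n mod p) ` {1..<p})"
    have "\<exists>p' e. prime p' \<and> e \<ge> 1 \<and> p = p' ^ e" using p(1) by (intro exI[of _ p] exI[of _ 1]) simp
    moreover have "field (GF p) \<and> finite (carrier (GF p)) \<and> card (carrier (GF p)) = p"
      using field_GF[OF p(1)] by simp
    ultimately have "poly k (int p) = int (num_conj_orbits (GF p) n (parabolic (GF p) n d) (GLn (GF p) n))"
      using assms(3) by blast
    then have "int s dvd poly k (int p)"
      using card_nth_powers_dvd_num_conj_orbits_parabolic[OF p(1)] by (simp add: s_def)
    moreover have "s dvd p - 1" "p - 1 \<le> n * s"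
      using card_nth_powers_dvd[OF p(1)] card_nth_powers_ge[OF p(1)] assms(1) by (simp_all add: s_def)
    ultimately show "\<exists>m s. N < m \<and> s dvd m - 1 \<and> int s dvd poly k (int m) \<and> m - 1 \<le> n * s"
      using p(2) by blast
  qed
  then show ?thesis by (simp add: poly_eq_0_iff_dvd)
qed

end
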